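(* Let $\sigma\in\mathrm{NC}_n$ and $1\le i<n$. Then $i$ is a noncrossing descent of $\sigma$ if and only if $i$ is the minimal element of its cycle of $\sigma$ and $i+1$ is not the minimal element of its cycle. In particular, for every $\sigma\in\mathrm{NC}_n\setminus\{\mathrm{id}\}$, $\sigma$ has at least one noncrossing descent.
   Context: A set partition of $[n]$ is noncrossing if there are no distinct blocks $P,Q$ with $a,b\in P$, $c,d\in Q$, $a<c<b<d$. To a noncrossing partition associate $\sigma\in S_n$ acting on each block $\{a_1<\dots<a_p\}$ by $\sigma(a_j)=a_{j-1}$ ($j\ge2$), $\sigma(a_1)=a_p$; $\mathrm{NC}_n$ is the set of these permutations, whose cycles (including fixed points) are the blocks. $s_i=(i,i+1)$, $\sigma s_i=\sigma\circ s_i$, $\ell$ is Coxeter length. $i$ is a noncrossing descent of $\sigma\in\mathrm{NC}_n$ if $\sigma s_i\in\mathrm{NC}_n$ and $\ell(\sigma s_i)<\ell(\sigma)$. *)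

theory Defs
  imports "HOL-Combinatorics.Combinatorics" "HOL-Library.Disjoint_Sets"
begin

text \<open>Permutations of [n] = {1..n} are functions nat => nat fixing everything outside {1..n}.\<close>

definition noncrossing :: "nat set set \<Rightarrow> bool" where
  "noncrossing P \<longleftrightarrow>
     (\<forall>B\<in>P. \<forall>C\<in>P. B \<noteq> C \<longrightarrow>
        \<not> (\<exists>a b c d. a \<in> B \<and> b \<in> B \<and> c \<in> C \<and> d \<in> C \<and> a < c \<and> c < b \<and> b < d))"

definition nc_perm :: "nat set set \<Rightarrow> nat \<Rightarrow> nat" where
  "nc_perm P a =
     (if \<exists>B\<in>P. a \<in> B then
        (let B = (THE B. B \<in> P \<and> a \<in> B) in
           if \<exists>b\<in>B. b < a then Max {b\<in>B. b < a} else Max B)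
      else a)"

definition NC :: "nat \<Rightarrow> (nat \<Rightarrow> nat) set" where
  "NC n = {nc_perm P | P. partition_on {1..n} P \<and> noncrossing P}"

definition s :: "nat \<Rightarrow> nat \<Rightarrow> nat" where
  "s i = transpose i (Suc i)"

text \<open>Coxeter length in S_n (w.r.t. adjacent transpositions) = number of inversions.\<close>
definition coxeter_length :: "nat \<Rightarrow> (nat \<Rightarrow> nat) \<Rightarrow> nat" where
  "coxeter_length n \<sigma> = card {(a, b). 1 \<le> a \<and> a < b \<and> b \<le> n \<and> \<sigma> b < \<sigma> a}"

definition nc_descent :: "nat \<Rightarrow> (nat \<Rightarrow> nat) \<Rightarrow> nat \<Rightarrow> bool" where
  "nc_descent n \<sigma> i \<longleftrightarrow>
     \<sigma> \<circ> s i \<in> NC n \<and> coxeter_length n (\<sigma> \<circ> s i) < coxeter_length n \<sigma>"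

definition cycle_of :: "(nat \<Rightarrow> nat) \<Rightarrow> nat \<Rightarrow> nat set" where
  "cycle_of \<sigma> x = {(\<sigma> ^^ k) x | k. True}"

end

theory Submission
  imports Defs
begin

text \<open>Since
  \<open>\<ell>(\<sigma> s\<^sub>i) < \<ell>(\<sigma>)\<close> iff \<open>\<sigma>(i+1) < \<sigma>(i)\<close>, and
  a noncrossing permutation \<open>\<tau>\<close> can only ascend at i if \<open>\<tau>(i) \<le> i \<le> \<tau>(i+1)\<close>, applying
  this to \<open>\<tau> = \<sigma> s\<^sub>i\<close> shows that a noncrossing descent forces \<open>\<sigma>(i) \<ge> i\<close> and \<open>\<sigma>(i+1) \<le> i\<close>: i is the least element of its block and
  i+1 is not. Conversely, under these conditions \<open>\<sigma> s\<^sub>i\<close> is the permutation of a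
  noncrossing partition: if i and i+1 share a block, \<open>{i}\<close> is split off it; otherwise the block
  of i is \<open>{i}\<close>, and merging it into the block of i+1 creates no crossing because i and i+1
  compare alike with every other element. Finally, the least y with \<open>\<sigma>(y) < y\<close> gives a
  descent at y - 1.\<close>

definition cyclic_pred :: "nat set \<Rightarrow> nat \<Rightarrow> nat \<Rightarrow> bool" where
  "cyclic_pred D x y \<longleftrightarrow> y \<in> D \<and>
     (y < x \<and> (\<forall>d\<in>D. d < x \<longrightarrow> d \<le> y) \<or> x \<le> y \<and> (\<forall>d\<in>D. x \<le> d \<and> d \<le> y))"

lemma cyclic_pred_unique: "cyclic_pred D x y \<Longrightarrow> cyclic_pred D x z \<Longrightarrow> y = z"
  unfolding cyclic_pred_def by (meson antisym not_le)

lemma cyclic_pred_subset: "cyclic_pred D x y \<Longrightarrow> y \<in> D' \<Longrightarrow> D' \<subseteq> D \<Longrightarrow> cyclic_pred D' x y"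
  unfolding cyclic_pred_def by blast

lemma cyclic_pred_less: "cyclic_pred D x y \<Longrightarrow> b \<in> D \<Longrightarrow> b < x \<Longrightarrow> b \<le> y \<and> y < x"
  unfolding cyclic_pred_def by (meson leD)

lemma cyclic_pred_Diff:
  assumes "cyclic_pred D x y" "a \<in> D" "b < a" "a < x"
  shows "cyclic_pred (D - {b}) x y"
proof -
  have "y \<in> D"
    using assms(1) unfolding cyclic_pred_def by blast
  moreover have "b < y"
    using cyclic_pred_less[OF assms(1,2,4)] assms(3) by simp
  ultimately show ?thesis
    using cyclic_pred_subset[OF assms(1), of "D - {b}"] by blast
qed

lemma cyclic_pred_not_less: "cyclic_pred D x y \<Longrightarrow> \<not> y < x \<Longrightarrow> d \<in> D \<Longrightarrow> x \<le> d \<and> d \<le> y"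
  unfolding cyclic_pred_def by blast

lemma cyclic_pred_insert:
  assumes "cyclic_pred D x y"
    and "y < x \<Longrightarrow> \<not> (y < a \<and> a < x)" and "x \<le> y \<Longrightarrow> x \<le> a \<and> a \<le> y"
  shows "cyclic_pred (insert a D) x y"
  using assms unfolding cyclic_pred_def by (auto simp: not_less)

lemma cyclic_pred_insert_before:
  assumes "cyclic_pred C x y" "Suc a \<in> C" "x \<noteq> Suc a" "c \<in> C" "c < a"
  shows "cyclic_pred (insert a C) x y"
proof (rule cyclic_pred_insert[OF assms(1)])
  show "\<not> (y < a \<and> a < x)"
  proof
    assume "y < a \<and> a < x"
    then have "Suc a < x"
      using assms(3) by auto
    then show False
      using cyclic_pred_less[OF assms(1,2)] \<open>y < a \<and> a < x\<close> by auto
  qed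
  show "x \<le> a \<and> a \<le> y" if "x \<le> y"
    using cyclic_pred_not_less[OF assms(1), of c] cyclic_pred_not_less[OF assms(1), of "Suc a"] that assms(2,4,5)
    by auto
qed

lemma partition_on_disjnt: "partition_on A P \<Longrightarrow> X \<in> P \<Longrightarrow> Y \<in> P \<Longrightarrow> X \<noteq> Y \<Longrightarrow> disjnt X Y"
  using partition_onD2 pairwiseD(1) by metis

lemma partition_on_block_eq:
  "partition_on A P \<Longrightarrow> D \<in> P \<Longrightarrow> E \<in> P \<Longrightarrow> x \<in> D \<Longrightarrow> x \<in> E \<Longrightarrow> D = E"
  using partition_on_disjnt disjnt_iff by metis

lemma partition_on_block_subset: "partition_on A P \<Longrightarrow> D \<in> P \<Longrightarrow> D \<subseteq> A"
  by (metis Union_upper partition_onD1)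

lemma partition_on_blockE:
  assumes "partition_on A P" "x \<in> A"
  obtains D where "D \<in> P" "x \<in> D"
  using assms(2) unfolding partition_onD1[OF assms(1)] by blast

lemma partition_on_merge:
  assumes "partition_on A P" "B \<in> P" "C \<in> P"
  shows "partition_on A (insert (B \<union> C) (P - {B, C}))"
proof (rule partition_onI)
  show "\<Union>(insert (B \<union> C) (P - {B, C})) = A"
    using partition_onD1[OF assms(1)] assms(2,3) by auto
  show "{} \<notin> insert (B \<union> C) (P - {B, C})"
    using partition_onD3[OF assms(1)] assms(2) by auto
  note blocks = partition_on_disjnt[OF assms(1)]
  have merged: "disjnt (B \<union> C) X" if "X \<in> P - {B, C}" for X
    using blocks[of B X] blocks[of C X] that assms(2,3) by auto
  show "disjnt p q"
    if "p \<in> insert (B \<union> C) (P - {B, C})" "q \<in> insert (B \<union> C) (P - {B, C})" "p \<noteq> q" for p q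
    using that blocks merged merged[THEN disjnt_sym] by (elim insertE) blast+
qed

lemma partition_on_split_off:
  assumes "partition_on A P" "B \<in> P" "a \<in> B" "B \<noteq> {a}"
  shows "partition_on A (insert {a} (insert (B - {a}) (P - {B})))"
proof (rule partition_onI)
  show "\<Union>(insert {a} (insert (B - {a}) (P - {B}))) = A"
    using partition_onD1[OF assms(1)] assms(2,3) by auto
  show "{} \<notin> insert {a} (insert (B - {a}) (P - {B}))"
    using partition_onD3[OF assms(1)] assms(2-4) by auto
  note blocks = partition_on_disjnt[OF assms(1)]
  have pieces: "disjnt {a} X" "disjnt (B - {a}) X" if "X \<in> P - {B}" for X
    using blocks[of B X] that assms(2,3) by (auto simp: disjnt_def)
  have apart: "disjnt {a} (B - {a})"
    by (simp add: disjnt_def)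
  show "disjnt p q"
    if "p \<in> insert {a} (insert (B - {a}) (P - {B}))" "q \<in> insert {a} (insert (B - {a}) (P - {B}))"
      "p \<noteq> q" for p q
    using that blocks pieces pieces[THEN disjnt_sym] apart apart[THEN disjnt_sym] by (elim insertE) blast+
qed

lemma nc_perm_block:
  assumes "partition_on A P" "D \<in> P" "x \<in> D"
  shows "nc_perm P x = (if \<exists>b\<in>D. b < x then Max {b\<in>D. b < x} else Max D)"
proof -
  have "(THE B. B \<in> P \<and> x \<in> B) = D"
    using assms partition_on_block_eq[OF assms(1)] by (intro the_equality) auto
  moreover have "\<exists>B\<in>P. x \<in> B"
    using assms by blast
  ultimately show ?thesis
    unfolding nc_perm_def Let_def by simp
qed

lemma cyclic_pred_nc_perm:
  assumes "finite A" "partition_on A P" "D \<in> P" "x \<in> D"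
  shows "cyclic_pred D x (nc_perm P x)"
proof -
  have fin: "finite D"
    using partition_on_block_subset[OF assms(2,3)] assms(1) finite_subset by blast
  show ?thesis
  proof (cases "\<exists>b\<in>D. b < x")
    case True
    then have "nc_perm P x = Max {b\<in>D. b < x}" "{b\<in>D. b < x} \<noteq> {}"
      using nc_perm_block[OF assms(2-4)] by auto
    then show ?thesis
      using fin Max_in[of "{b\<in>D. b < x}"] Max_ge[of "{b\<in>D. b < x}"]
      unfolding cyclic_pred_def by auto
  next
    case False
    then have "nc_perm P x = Max D"
      using nc_perm_block[OF assms(2-4)] by auto
    moreover have "Max D \<in> D"
      using Max_in[OF fin] assms(4) by blast
    ultimately show ?thesis
      using fin False assms(4) Max_ge[OF fin]
      unfolding cyclic_pred_def by (auto simp: not_less)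
  qed
qed

lemma nc_perm_outside:
  assumes "partition_on A P" "x \<notin> A"
  shows "nc_perm P x = x"
proof -
  have "\<not> (\<exists>B\<in>P. x \<in> B)"
    using partition_on_block_subset[OF assms(1)] assms(2) by blast
  then show ?thesis
    unfolding nc_perm_def by simp
qed

lemma nc_perm_eqI:
  assumes "finite A" "partition_on A P"
    and "\<And>x. x \<notin> A \<Longrightarrow> f x = x"
    and "\<And>D x. D \<in> P \<Longrightarrow> x \<in> D \<Longrightarrow> cyclic_pred D x (f x)"
  shows "nc_perm P = f"
proof
  fix x
  show "nc_perm P x = f x"
  proof (cases "x \<in> A")
    case True
    then obtain D where D: "D \<in> P" "x \<in> D"
      using partition_on_blockE[OF assms(2)] by blast
    show ?thesis
      using cyclic_pred_unique[OF cyclic_pred_nc_perm[OF assms(1,2) D] assms(4)[OF D]] .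
  next
    case False
    then show ?thesis
      using nc_perm_outside[OF assms(2) False] assms(3)[OF False] by simp
  qed
qed

lemma nc_perm_in_set:
  assumes "finite A" "partition_on A P" "x \<in> A"
  shows "nc_perm P x \<in> A"
proof -
  obtain D where "D \<in> P" "x \<in> D"
    using partition_on_blockE[OF assms(2,3)] .
  then show ?thesis
    using cyclic_pred_nc_perm[OF assms(1,2)] partition_on_block_subset[OF assms(2)]
    unfolding cyclic_pred_def by blast
qed

lemma s_s [simp]: "s i (s i x) = x"
  unfolding s_def by simp

lemma comp_s_s [simp]: "\<sigma> \<circ> s i \<circ> s i = \<sigma>"
  by (simp add: fun_eq_iff)

lemma s_apply [simp]: "s i i = Suc i" "s i (Suc i) = i" "x \<noteq> i \<Longrightarrow> x \<noteq> Suc i \<Longrightarrow> s i x = x"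
  unfolding s_def by auto

definition inversions :: "nat \<Rightarrow> (nat \<Rightarrow> nat) \<Rightarrow> (nat \<times> nat) set" where
  "inversions n \<sigma> = {(a, b). 1 \<le> a \<and> a < b \<and> b \<le> n \<and> \<sigma> b < \<sigma> a}"

lemma finite_inversions: "finite (inversions n \<sigma>)"
  by (rule finite_subset[of _ "{1..n} \<times> {1..n}"]) (auto simp: inversions_def)

lemma inj_map_prod_s: "inj (map_prod (s i) (s i))"
  by (rule inj_on_inverseI[where g = "map_prod (s i) (s i)"]) auto

lemma inversions_comp_s:
  assumes "1 \<le> i" "i < n"
  shows "map_prod (s i) (s i) ` (inversions n \<sigma> - {(i, Suc i)})
           \<subseteq> inversions n (\<sigma> \<circ> s i) - {(i, Suc i)}"
  using assms unfolding inversions_def s_def transpose_def by (auto split: if_split_asm)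

lemma card_inversions_comp_s:
  assumes "1 \<le> i" "i < n"
  shows "card (inversions n (\<sigma> \<circ> s i) - {(i, Suc i)}) = card (inversions n \<sigma> - {(i, Suc i)})"
proof (rule antisym)
  show "card (inversions n \<sigma> - {(i, Suc i)}) \<le> card (inversions n (\<sigma> \<circ> s i) - {(i, Suc i)})"
    using card_inj_on_le[OF inj_on_subset[OF inj_map_prod_s] inversions_comp_s[OF assms]]
    by (simp add: finite_inversions)
  show "card (inversions n (\<sigma> \<circ> s i) - {(i, Suc i)}) \<le> card (inversions n \<sigma> - {(i, Suc i)})"
    using card_inj_on_le[OF inj_on_subset[OF inj_map_prod_s] inversions_comp_s[OF assms, of "\<sigma> \<circ> s i"]]
    by (simp add: finite_inversions)
qed

lemma coxeter_length_comp_s_less_iff: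
  assumes "1 \<le> i" "i < n"
  shows "coxeter_length n (\<sigma> \<circ> s i) < coxeter_length n \<sigma> \<longleftrightarrow> \<sigma> (Suc i) < \<sigma> i"
proof -
  have split: "coxeter_length n \<tau> = card (inversions n \<tau> - {(i, Suc i)}) + (if \<tau> (Suc i) < \<tau> i then 1 else 0)"
    for \<tau>
  proof -
    have "(i, Suc i) \<in> inversions n \<tau> \<longleftrightarrow> \<tau> (Suc i) < \<tau> i"
      using assms by (simp add: inversions_def)
    then show ?thesis
      unfolding coxeter_length_def inversions_def[symmetric]
      using card_Suc_Diff1[OF finite_inversions] by auto
  qed
  show ?thesis
    unfolding split[of \<sigma>] split[of "\<sigma> \<circ> s i"] card_inversions_comp_s[OF assms]
    by (simp add: s_def)
qed

definition crosses :: "nat set \<Rightarrow> nat set \<Rightarrow> bool" where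
  "crosses X Y \<longleftrightarrow> (\<exists>a b c d. a \<in> X \<and> b \<in> X \<and> c \<in> Y \<and> d \<in> Y \<and> a < c \<and> c < b \<and> b < d)"

lemma noncrossing_iff_crosses: "noncrossing P \<longleftrightarrow> (\<forall>X\<in>P. \<forall>Y\<in>P. X \<noteq> Y \<longrightarrow> \<not> crosses X Y)"
  unfolding noncrossing_def crosses_def ..

lemma noncrossingD: "noncrossing P \<Longrightarrow> X \<in> P \<Longrightarrow> Y \<in> P \<Longrightarrow> X \<noteq> Y \<Longrightarrow> \<not> crosses X Y"
  unfolding noncrossing_iff_crosses by blast

lemma crossesI:
  "a \<in> X \<Longrightarrow> b \<in> X \<Longrightarrow> c \<in> Y \<Longrightarrow> d \<in> Y \<Longrightarrow> a < c \<Longrightarrow> c < b \<Longrightarrow> b < d \<Longrightarrow> crosses X Y"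
  unfolding crosses_def by blast

lemma crosses_mono: "crosses X Y \<Longrightarrow> X \<subseteq> X' \<Longrightarrow> Y \<subseteq> Y' \<Longrightarrow> crosses X' Y'"
  unfolding crosses_def by blast

lemma not_crosses_singleton: "\<not> crosses {a} Y" "\<not> crosses X {c}"
  unfolding crosses_def by auto

lemma crosses_insert_adjacent:
  assumes "Suc i \<in> C" "i \<notin> Y" "Suc i \<notin> Y"
  shows "crosses (insert i C) Y \<Longrightarrow> crosses C Y" and "crosses Y (insert i C) \<Longrightarrow> crosses Y C"
proof -
  define f where "f x = (if x = i then Suc i else x)" for x
  have f_in: "f x \<in> C" if "x \<in> insert i C" for x
    using that assms(1) by (auto simp: f_def)
  \<comment> \<open>replacing i by i+1 changes no comparison with an element of Y\<close>
  have f_less: "f x < y \<longleftrightarrow> x < y" "y < f x \<longleftrightarrow> y < x" if "y \<in> Y" for x y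
  proof -
    have "y \<noteq> i" "y \<noteq> Suc i"
      using that assms(2,3) by auto
    then show "f x < y \<longleftrightarrow> x < y" "y < f x \<longleftrightarrow> y < x"
      by (auto simp: f_def)
  qed
  show "crosses (insert i C) Y \<Longrightarrow> crosses C Y" "crosses Y (insert i C) \<Longrightarrow> crosses Y C"
    unfolding crosses_def using f_in f_less by metis+
qed

lemma noncrossing_split_off:
  assumes "noncrossing P" "B \<in> P"
  shows "noncrossing (insert {a} (insert (B - {a}) (P - {B})))"
  unfolding noncrossing_iff_crosses
proof (intro ballI impI)
  fix X Y
  assume "X \<in> insert {a} (insert (B - {a}) (P - {B}))" "Y \<in> insert {a} (insert (B - {a}) (P - {B}))"
    and "X \<noteq> Y"
  then consider "X = {a} \<or> Y = {a}" | "X = B - {a}" "Y \<in> P - {B}" | "X \<in> P - {B}" "Y = B - {a}"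
    | "X \<in> P - {B}" "Y \<in> P - {B}"
    by blast
  then show "\<not> crosses X Y"
  proof cases
    case 1
    then show ?thesis
      using not_crosses_singleton by blast
  next
    case 2
    then show ?thesis
      using noncrossingD[OF assms(1) assms(2), of Y] crosses_mono[of X Y B Y] by blast
  next
    case 3
    then show ?thesis
      using noncrossingD[OF assms(1) _ assms(2), of X] crosses_mono[of X Y X B] by blast
  next
    case 4
    then show ?thesis
      using noncrossingD[OF assms(1), of X Y] \<open>X \<noteq> Y\<close> by blast
  qed
qed

lemma noncrossing_merge_adjacent:
  assumes "partition_on A P" "noncrossing P" "{i} \<in> P" "C \<in> P" "Suc i \<in> C"
  shows "noncrossing (insert (insert i C) (P - {{i}, C}))"
  unfolding noncrossing_iff_crosses
proof (intro ballI impI)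
  have away: "i \<notin> Y" "Suc i \<notin> Y" if "Y \<in> P - {{i}, C}" for Y
    using that partition_on_block_eq[OF assms(1) _ assms(3), of Y i]
      partition_on_block_eq[OF assms(1) _ assms(4), of Y "Suc i"] assms(5) by auto
  fix X Y
  assume "X \<in> insert (insert i C) (P - {{i}, C})" "Y \<in> insert (insert i C) (P - {{i}, C})" "X \<noteq> Y"
  then consider "X = insert i C" "Y \<in> P - {{i}, C}" | "X \<in> P - {{i}, C}" "Y = insert i C"
    | "X \<in> P - {{i}, C}" "Y \<in> P - {{i}, C}"
    by blast
  then show "\<not> crosses X Y"
  proof cases
    case 1
    then show ?thesis
      using crosses_insert_adjacent(1)[OF assms(5) away[OF 1(2)]] noncrossingD[OF assms(2) assms(4), of Y]
      by blast
  next
    case 2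
    then show ?thesis
      using crosses_insert_adjacent(2)[OF assms(5) away[OF 2(1)]] noncrossingD[OF assms(2) _ assms(4), of X]
      by blast
  next
    case 3
    then show ?thesis
      using noncrossingD[OF assms(2), of X Y] \<open>X \<noteq> Y\<close> by blast
  qed
qed

lemma nc_perm_eq_comp_sI:
  assumes "finite A" "partition_on A P" "partition_on A Q" "i \<in> A" "Suc i \<in> A"
    and "\<And>D x. D \<in> Q \<Longrightarrow> x \<in> D \<Longrightarrow> cyclic_pred D x (nc_perm P (s i x))"
  shows "nc_perm Q = nc_perm P \<circ> s i"
proof (rule nc_perm_eqI[OF assms(1,3)])
  show "(nc_perm P \<circ> s i) x = x" if "x \<notin> A" for x
  proof -
    have "x \<noteq> i" "x \<noteq> Suc i"
      using assms(4,5) that by auto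
    then show ?thesis
      using nc_perm_outside[OF assms(2) that] by simp
  qed
qed (use assms(6) in simp)

lemma nc_perm_split_off_min:
  assumes "finite A" "partition_on A P" "B \<in> P" "i \<in> B" "Suc i \<in> B" "\<forall>b\<in>B. i \<le> b"
  shows "nc_perm (insert {i} (insert (B - {i}) (P - {B}))) = nc_perm P \<circ> s i"
proof -
  let ?\<sigma> = "nc_perm P"
  have cyc: "cyclic_pred D x (?\<sigma> x)" if "D \<in> P" "x \<in> D" for D x
    using cyclic_pred_nc_perm[OF assms(1,2) that] .
  have "B \<noteq> {i}"
    using assms(5) by auto
  have "?\<sigma> (Suc i) = i"
    using cyclic_pred_unique[OF cyc[OF assms(3,5)]] assms(4) by (simp add: cyclic_pred_def)
  have top: "\<forall>d\<in>B. d \<le> ?\<sigma> i" "?\<sigma> i \<in> B"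
    using cyc[OF assms(3,4)] assms(6) by (auto simp: cyclic_pred_def)
  have "i \<in> A" "Suc i \<in> A"
    using partition_on_block_subset[OF assms(2,3)] assms(4,5) by auto
  show ?thesis
  proof (rule nc_perm_eq_comp_sI[OF assms(1,2) partition_on_split_off[OF assms(2-4) \<open>B \<noteq> {i}\<close>]
        \<open>i \<in> A\<close> \<open>Suc i \<in> A\<close>])
    fix D x
    assume D: "D \<in> insert {i} (insert (B - {i}) (P - {B}))" and x: "x \<in> D"
    have "x \<notin> B" if "D \<in> P - {B}"
      using that x partition_on_block_eq[OF assms(2) _ assms(3), of D x] by blast
    moreover have "x = Suc i \<or> Suc i < x" if "D = B - {i}"
    proof -
      have "i < x"
        using that x assms(6) by force
      then show ?thesis
        by auto
    qed
    ultimately consider "D = {i}" "x = i" | "D = B - {i}" "x = Suc i" | "D = B - {i}" "x \<in> B" "Suc i < x"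
      | "D \<in> P" "x \<in> D" "x \<notin> B"
      using D x by blast
    then show "cyclic_pred D x (?\<sigma> (s i x))"
    proof cases
      case 1
      then show ?thesis
        using \<open>?\<sigma> (Suc i) = i\<close> by (simp add: cyclic_pred_def)
    next
      case 2
      then show ?thesis
        using top assms(5,6) by (auto simp: cyclic_pred_def Suc_le_eq)
    next
      case 3
      then show ?thesis
        using cyclic_pred_Diff[OF cyc[OF assms(3) 3(2)] assms(5) lessI 3(3)] by simp
    next
      case 4
      then have "s i x = x"
        using assms(4,5) by (metis s_apply(3))
      then show ?thesis
        using cyc[OF 4(1,2)] by simp
    qed
  qed
qed

lemma nc_perm_merge_singleton:
  assumes "finite A" "partition_on A P" "{i} \<in> P" "C \<in> P" "Suc i \<in> C" "nc_perm P (Suc i) < i"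
  shows "nc_perm (insert (insert i C) (P - {{i}, C})) = nc_perm P \<circ> s i"
proof -
  let ?\<sigma> = "nc_perm P"
  have cyc: "cyclic_pred D x (?\<sigma> x)" if "D \<in> P" "x \<in> D" for D x
    using cyclic_pred_nc_perm[OF assms(1,2) that] .
  have "?\<sigma> i = i"
    using cyc[OF assms(3)] by (simp add: cyclic_pred_def)
  have below: "?\<sigma> (Suc i) \<in> C" "\<forall>c\<in>C. c < Suc i \<longrightarrow> c \<le> ?\<sigma> (Suc i)"
    using cyc[OF assms(4,5)] assms(6) by (auto simp: cyclic_pred_def)
  have part: "partition_on A (insert (insert i C) (P - {{i}, C}))"
    using partition_on_merge[OF assms(2-4)] by simp
  have "i \<in> A" "Suc i \<in> A"
    using partition_on_block_subset[OF assms(2)] assms(3-5) by auto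
  show ?thesis
  proof (rule nc_perm_eq_comp_sI[OF assms(1,2) part \<open>i \<in> A\<close> \<open>Suc i \<in> A\<close>])
    fix D x
    assume D: "D \<in> insert (insert i C) (P - {{i}, C})" and x: "x \<in> D"
    have "x \<noteq> i" "x \<noteq> Suc i" if "D \<in> P - {{i}, C}"
      using that x partition_on_block_eq[OF assms(2) _ assms(3), of D x]
        partition_on_block_eq[OF assms(2) _ assms(4), of D x] assms(5) by auto
    then consider "D = insert i C" "x = i" | "D = insert i C" "x = Suc i"
      | "D = insert i C" "x \<in> C" "x \<noteq> i" "x \<noteq> Suc i" | "D \<in> P" "x \<in> D" "x \<noteq> i" "x \<noteq> Suc i"
      using D x by blast
    then show "cyclic_pred D x (?\<sigma> (s i x))"
    proof cases
      case 1
      then show ?thesis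
        using below assms(6) by (auto simp: cyclic_pred_def)
    next
      case 2
      then show ?thesis
        using \<open>?\<sigma> i = i\<close> by (auto simp: cyclic_pred_def)
    next
      case 3
      then show ?thesis
        using cyclic_pred_insert_before[OF cyc[OF assms(4) 3(2)] assms(5) 3(4) below(1) assms(6)] by simp
    next
      case 4
      then show ?thesis
        using cyc[OF 4(1,2)] by simp
    qed
  qed
qed

lemma NC_I: "partition_on {1..n} P \<Longrightarrow> noncrossing P \<Longrightarrow> nc_perm P \<in> NC n"
  unfolding NC_def by blast

lemma NC_E:
  assumes "\<sigma> \<in> NC n"
  obtains P where "partition_on {1..n} P" "noncrossing P" "\<sigma> = nc_perm P"
  using assms unfolding NC_def by blast

lemma noncrossing_block_singleton:
  assumes "partition_on A P" "noncrossing P" "B \<in> P" "C \<in> P" "B \<noteq> C"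
    and "i \<in> B" "\<forall>b\<in>B. i \<le> b" "c \<in> C" "c < i" "Suc i \<in> C"
  shows "B = {i}"
proof (rule ccontr)
  assume "B \<noteq> {i}"
  then obtain b where "b \<in> B" "b \<noteq> i"
    using assms(6) by blast
  moreover have "b \<noteq> Suc i"
    using partition_on_block_eq[OF assms(1,3,4) \<open>b \<in> B\<close>] assms(5,10) by auto
  ultimately have "Suc i < b"
    using assms(7) by force
  then have "crosses C B"
    using crossesI[OF assms(8,10,6) \<open>b \<in> B\<close>] assms(9) by simp
  then show False
    using noncrossingD[OF assms(2,4,3)] assms(5) by blast
qed

lemma comp_s_in_NC:
  assumes "partition_on {1..n} P" "noncrossing P" "1 \<le> i" "i < n"
    and "\<not> nc_perm P i < i" "nc_perm P (Suc i) < Suc i"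
  shows "nc_perm P \<circ> s i \<in> NC n"
proof -
  let ?\<sigma> = "nc_perm P"
  obtain B where B: "B \<in> P" "i \<in> B"
    using partition_on_blockE[OF assms(1), of i] assms(3,4) by auto
  obtain C where C: "C \<in> P" "Suc i \<in> C"
    using partition_on_blockE[OF assms(1), of "Suc i"] assms(3,4) by auto
  have B_above: "\<forall>b\<in>B. i \<le> b"
    using cyclic_pred_nc_perm[OF _ assms(1) B] assms(5) by (auto simp: cyclic_pred_def)
  have C_below: "?\<sigma> (Suc i) \<in> C" "\<forall>c\<in>C. c < Suc i \<longrightarrow> c \<le> ?\<sigma> (Suc i)"
    using cyclic_pred_nc_perm[OF _ assms(1) C] assms(6) by (auto simp: cyclic_pred_def)
  show ?thesis
  proof (cases "B = C")
    case True
    then have "B \<noteq> {i}"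
      using C(2) by auto
    then show ?thesis
      using NC_I[OF partition_on_split_off[OF assms(1) B] noncrossing_split_off[OF assms(2) B(1)]]
        nc_perm_split_off_min[OF _ assms(1) B] C(2) True B_above by simp
  next
    case False
    then have "?\<sigma> (Suc i) \<noteq> i"
      using partition_on_block_eq[OF assms(1) B(1) C(1) B(2)] C_below(1) by auto
    then have "?\<sigma> (Suc i) < i"
      using assms(6) by simp
    have "B = {i}"
      using noncrossing_block_singleton[OF assms(1,2) B(1) C(1) False B(2) B_above C_below(1)
          \<open>?\<sigma> (Suc i) < i\<close> C(2)] .
    show ?thesis
      using NC_I[OF _ noncrossing_merge_adjacent[OF assms(1,2) _ C]] partition_on_merge[OF assms(1) B(1) C(1)]
        nc_perm_merge_singleton[OF _ assms(1) _ C \<open>?\<sigma> (Suc i) < i\<close>] B(1) \<open>B = {i}\<close> by simp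
  qed
qed

lemma nc_perm_Suc_less:
  assumes "finite A" "partition_on A P" "i \<in> A" "Suc i \<in> A"
    and "\<not> nc_perm P i < i" "nc_perm P (Suc i) < Suc i"
  shows "nc_perm P (Suc i) < nc_perm P i"
proof (rule ccontr)
  let ?\<sigma> = "nc_perm P"
  obtain B where B: "B \<in> P" "i \<in> B"
    using partition_on_blockE[OF assms(2,3)] .
  obtain C where C: "C \<in> P" "Suc i \<in> C"
    using partition_on_blockE[OF assms(2,4)] .
  have B_above: "\<forall>b\<in>B. b \<le> ?\<sigma> i"
    using cyclic_pred_nc_perm[OF assms(1,2) B] assms(5) by (auto simp: cyclic_pred_def)
  assume "\<not> ?\<sigma> (Suc i) < ?\<sigma> i"
  then have "?\<sigma> (Suc i) = i" "?\<sigma> i = i"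
    using assms(5,6) by linarith+
  then have "B = C"
    using partition_on_block_eq[OF assms(2) B(1) C(1) B(2)] cyclic_pred_nc_perm[OF assms(1,2) C]
    by (simp add: cyclic_pred_def)
  then show False
    using B_above C(2) \<open>?\<sigma> i = i\<close> by force
qed

lemma NC_ascent_bounds:
  assumes "\<tau> \<in> NC n" "1 \<le> i" "i < n" "\<tau> i < \<tau> (Suc i)"
  shows "\<tau> i \<le> i" "i \<le> \<tau> (Suc i)"
proof -
  obtain P where P: "partition_on {1..n} P" "noncrossing P" "\<tau> = nc_perm P"
    using NC_E[OF assms(1)] .
  obtain E where E: "E \<in> P" "i \<in> E"
    using partition_on_blockE[OF P(1), of i] assms(2,3) by auto
  obtain D where D: "D \<in> P" "Suc i \<in> D"
    using partition_on_blockE[OF P(1), of "Suc i"] assms(2,3) by auto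
  have cE: "cyclic_pred E i (\<tau> i)" and cD: "cyclic_pred D (Suc i) (\<tau> (Suc i))"
    using cyclic_pred_nc_perm[OF _ P(1) E] cyclic_pred_nc_perm[OF _ P(1) D] P(3) by simp_all
  show "i \<le> \<tau> (Suc i)"
  proof (rule ccontr)
    assume "\<not> i \<le> \<tau> (Suc i)"
    then have "i \<notin> D" "\<tau> i \<in> E" "\<tau> (Suc i) \<in> D"
      using cD cE unfolding cyclic_pred_def by auto
    then have "crosses E D"
      using crossesI[of "\<tau> i" E i "\<tau> (Suc i)" D "Suc i"] E(2) D(2) assms(4) \<open>\<not> i \<le> \<tau> (Suc i)\<close> by simp
    then show False
      using noncrossingD[OF P(2) E(1) D(1)] E(2) \<open>i \<notin> D\<close> by blast
  qed
  show "\<tau> i \<le> i"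
  proof (rule ccontr)
    assume "\<not> \<tau> i \<le> i"
    then have "\<tau> i \<in> E" "\<forall>e\<in>E. e \<le> \<tau> i" "\<tau> (Suc i) \<in> D"
      using cD cE unfolding cyclic_pred_def by auto
    then have "D \<noteq> E" "\<tau> i \<noteq> Suc i"
      using assms(4) partition_on_block_eq[OF P(1) D(1) E(1) D(2)] by force+
    then have "crosses E D"
      using crossesI[of i E "\<tau> i" "Suc i" D "\<tau> (Suc i)"] E(2) D(2) \<open>\<tau> i \<in> E\<close> \<open>\<tau> (Suc i) \<in> D\<close>
        assms(4) \<open>\<not> \<tau> i \<le> i\<close> by simp
    then show False
      using noncrossingD[OF P(2) E(1) D(1)] \<open>D \<noteq> E\<close> by blast
  qed
qed

lemma cycle_of_subset:
  assumes "\<And>y. y \<in> D \<Longrightarrow> \<sigma> y \<in> D" "x \<in> D"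
  shows "cycle_of \<sigma> x \<subseteq> D"
proof -
  have "(\<sigma> ^^ k) x \<in> D" for k
    by (induction k) (simp_all add: assms)
  then show ?thesis
    unfolding cycle_of_def by blast
qed

lemma Min_cycle_of_nc_perm_iff:
  assumes "finite A" "partition_on A P" "x \<in> A"
  shows "x = Min (cycle_of (nc_perm P) x) \<longleftrightarrow> \<not> nc_perm P x < x"
proof -
  let ?\<sigma> = "nc_perm P"
  obtain D where D: "D \<in> P" "x \<in> D"
    using partition_on_blockE[OF assms(2,3)] .
  have cyc: "cyclic_pred D y (?\<sigma> y)" if "y \<in> D" for y
    using cyclic_pred_nc_perm[OF assms(1,2) D(1) that] .
  have sub: "cycle_of ?\<sigma> x \<subseteq> D"
    using cycle_of_subset[OF _ D(2)] cyc unfolding cyclic_pred_def by blast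
  have fin: "finite (cycle_of ?\<sigma> x)"
    using finite_subset[OF sub] partition_on_block_subset[OF assms(2) D(1)] assms(1) finite_subset by blast
  have "x \<in> cycle_of ?\<sigma> x"
    unfolding cycle_of_def by (auto intro: exI[of _ 0])
  have "?\<sigma> x \<in> cycle_of ?\<sigma> x"
    unfolding cycle_of_def by (auto intro!: exI[of _ 1])
  show ?thesis
  proof
    assume "x = Min (cycle_of ?\<sigma> x)"
    then show "\<not> ?\<sigma> x < x"
      using Min_le[OF fin \<open>?\<sigma> x \<in> cycle_of ?\<sigma> x\<close>] by auto
  next
    assume "\<not> ?\<sigma> x < x"
    then have "\<forall>d\<in>D. x \<le> d"
      using cyc[OF D(2)] unfolding cyclic_pred_def by auto
    then show "x = Min (cycle_of ?\<sigma> x)"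
      using sub fin \<open>x \<in> cycle_of ?\<sigma> x\<close> by (intro Min_eqI[symmetric]) auto
  qed
qed

lemma nc_perm_exists_less:
  assumes "finite A" "partition_on A P" "nc_perm P \<noteq> id"
  shows "\<exists>y\<in>A. nc_perm P y < y"
proof -
  let ?\<sigma> = "nc_perm P"
  obtain x where "?\<sigma> x \<noteq> x"
    using assms(3) by (metis eq_id_iff)
  then have "x \<in> A"
    using nc_perm_outside[OF assms(2)] by blast
  then obtain D where D: "D \<in> P" "x \<in> D"
    using partition_on_blockE[OF assms(2)] by blast
  show ?thesis
  proof (cases "?\<sigma> x < x")
    case False
    \<comment> \<open>x is then the least element of its block, so its image, the largest, is not\<close>
    then have "x < ?\<sigma> x" "?\<sigma> x \<in> D"
      using cyclic_pred_nc_perm[OF assms(1,2) D] \<open>?\<sigma> x \<noteq> x\<close> unfolding cyclic_pred_def by auto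
    then have "?\<sigma> (?\<sigma> x) < ?\<sigma> x"
      using cyclic_pred_nc_perm[OF assms(1,2) D(1) \<open>?\<sigma> x \<in> D\<close>] D(2) unfolding cyclic_pred_def
      by (meson leD)
    then show ?thesis
      using partition_on_block_subset[OF assms(2) D(1)] \<open>?\<sigma> x \<in> D\<close> by blast
  qed (use \<open>x \<in> A\<close> in blast)
qed

lemma nc_perm_exists_drop:
  assumes "partition_on {1..n} P" "nc_perm P \<noteq> id"
  obtains i where "1 \<le> i" "i < n" "\<not> nc_perm P i < i" "nc_perm P (Suc i) < Suc i"
proof -
  let ?\<sigma> = "nc_perm P"
  obtain y where y: "y \<in> {1..n}" "?\<sigma> y < y" and least: "\<And>z. z < y \<Longrightarrow> \<not> (z \<in> {1..n} \<and> ?\<sigma> z < z)"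
    using nc_perm_exists_less[OF _ assms] exists_least_iff[of "\<lambda>y. y \<in> {1..n} \<and> ?\<sigma> y < y"] by auto
  have "y \<noteq> 1"
    using nc_perm_in_set[OF _ assms(1), of 1] y by auto
  then obtain i where "y = Suc i" "1 \<le> i"
    using y(1) by (cases y) auto
  then show ?thesis
    using that[of i] y least[of i] by auto
qed

lemma nc_descent_iff:
  assumes "\<sigma> \<in> NC n" "1 \<le> i" "i < n"
  shows "nc_descent n \<sigma> i \<longleftrightarrow> \<not> \<sigma> i < i \<and> \<sigma> (Suc i) < Suc i"
proof -
  obtain P where P: "partition_on {1..n} P" "noncrossing P" "\<sigma> = nc_perm P"
    using NC_E[OF assms(1)] .
  have "nc_descent n \<sigma> i \<longleftrightarrow> \<sigma> \<circ> s i \<in> NC n \<and> \<sigma> (Suc i) < \<sigma> i"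
    unfolding nc_descent_def coxeter_length_comp_s_less_iff[OF assms(2,3)] ..
  also have "\<dots> \<longleftrightarrow> \<not> \<sigma> i < i \<and> \<sigma> (Suc i) < Suc i"
  proof
    assume "\<sigma> \<circ> s i \<in> NC n \<and> \<sigma> (Suc i) < \<sigma> i"
    then show "\<not> \<sigma> i < i \<and> \<sigma> (Suc i) < Suc i"
      using NC_ascent_bounds[of "\<sigma> \<circ> s i" n i] assms(2,3) by simp
  next
    assume "\<not> \<sigma> i < i \<and> \<sigma> (Suc i) < Suc i"
    then show "\<sigma> \<circ> s i \<in> NC n \<and> \<sigma> (Suc i) < \<sigma> i"
      using comp_s_in_NC[OF P(1,2) assms(2,3)] nc_perm_Suc_less[OF _ P(1), of i] assms(2,3) P(3) by simp
  qed
  finally show ?thesis .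
qed

theorem proposition7p7:
  fixes n :: nat and \<sigma> :: "nat \<Rightarrow> nat"
  assumes "\<sigma> \<in> NC n"
  shows "(\<forall>i. 1 \<le> i \<and> i < n \<longrightarrow>
            (nc_descent n \<sigma> i \<longleftrightarrow>
               i = Min (cycle_of \<sigma> i) \<and> Suc i \<noteq> Min (cycle_of \<sigma> (Suc i))))
         \<and> (\<sigma> \<noteq> id \<longrightarrow> (\<exists>i. 1 \<le> i \<and> i < n \<and> nc_descent n \<sigma> i))"
proof -
  obtain P where P: "partition_on {1..n} P" "noncrossing P" "\<sigma> = nc_perm P"
    using NC_E[OF assms] .
  have "nc_descent n \<sigma> i \<longleftrightarrow> i = Min (cycle_of \<sigma> i) \<and> Suc i \<noteq> Min (cycle_of \<sigma> (Suc i))"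
    if "1 \<le> i" "i < n" for i
    using nc_descent_iff[OF assms that] that P(3)
      Min_cycle_of_nc_perm_iff[OF _ P(1), of i] Min_cycle_of_nc_perm_iff[OF _ P(1), of "Suc i"] by simp
  moreover have "\<exists>i. 1 \<le> i \<and> i < n \<and> nc_descent n \<sigma> i" if "\<sigma> \<noteq> id"
    using nc_perm_exists_drop[OF P(1)] nc_descent_iff[OF assms] that P(3) by metis
  ultimately show ?thesis
    by blast
qed

end
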